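(* If $C\subseteq\mathbb{R}$ is infinite and $|\mathbb{R}\setminus C|=\mathfrak{c}$, then there is a two-point selection $f$ on $\mathbb{R}$ such that $C$ is not closed in $\tau_f$ and $C$ is not a $G_\delta$-set in $\tau_f$.
   Context: $\mathfrak{c}=|\mathbb{R}|$. A two-point selection on $\mathbb{R}$ is a function $f$ from the set of two-element subsets of $\mathbb{R}$ to $\mathbb{R}$ with $f(F)\in F$. Write $r<_f s$ if $f(\{r,s\})=r$ ($r\ne s$), $(\leftarrow,r)_f=\{x: x<_f r\}$, $(r,\rightarrow)_f=\{x: r<_f x\}$. The topology $\tau_f$ on $\mathbb{R}$ is generated (as a subbase) by all sets $(\leftarrow,r)_f$, $(r,\rightarrow)_f$, $r\in\mathbb{R}$. A $G_\delta$-set is a countable intersection of open sets. *)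

theory Defs
  imports "HOL-Analysis.Analysis"
begin

definition two_point_selection :: "(real set \<Rightarrow> real) \<Rightarrow> bool" where
  "two_point_selection f \<longleftrightarrow> (\<forall>F. card F = 2 \<longrightarrow> f F \<in> F)"

definition sel_less :: "(real set \<Rightarrow> real) \<Rightarrow> real \<Rightarrow> real \<Rightarrow> bool" where
  "sel_less f r s \<longleftrightarrow> r \<noteq> s \<and> f {r, s} = r"

definition sel_left_ray :: "(real set \<Rightarrow> real) \<Rightarrow> real \<Rightarrow> real set" where
  "sel_left_ray f r = {x. sel_less f x r}"

definition sel_right_ray :: "(real set \<Rightarrow> real) \<Rightarrow> real \<Rightarrow> real set" where
  "sel_right_ray f r = {x. sel_less f r x}"

definition sel_topology :: "(real set \<Rightarrow> real) \<Rightarrow> real topology" where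
  "sel_topology f = topology_generated_by
     ((\<lambda>r. sel_left_ray f r) ` UNIV \<union> (\<lambda>r. sel_right_ray f r) ` UNIV)"

end

(* Pick d in C and q outside C, and let f pick the winner of a tournament on the reals that
   orders them in four blocks: d, then the complement of C without q, then C without d, then q.
   As the f-maximum, q only has neighbourhoods that are finite intersections of rays (r, ->);
   ordering C without d as a chain with no last element puts q in the closure of C.
   As the f-minimum, d has neighbourhoods that contain an intersection of finitely many rays
   (<-, r), so countably many open sets around C involve only countably many such r; C is not a
   G_delta as soon as every countable set is beaten by some point outside C.  Such a tournament on
   the complement of C exists because it has size continuum: let each point code a countable
   subset, every countable set having uncountably many codes, and let x beat y when x codes y
   but not conversely, the real order deciding otherwise. *)

theory Submission
  imports Defs
begin

definition tournament_selection :: "(real \<Rightarrow> real \<Rightarrow> bool) \<Rightarrow> real set \<Rightarrow> real" where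
  "tournament_selection B F = (SOME x. x \<in> F \<and> (\<forall>y \<in> F - {x}. B x y))"

lemma tournament_selection_winner:
  assumes "asymp B" "B x y"
  shows "tournament_selection B {x, y} = x"
  unfolding tournament_selection_def
proof (rule some_equality)
  show "x \<in> {x, y} \<and> (\<forall>z \<in> {x, y} - {x}. B x z)"
    using assms(2) by blast
  fix z assume "z \<in> {x, y} \<and> (\<forall>w \<in> {x, y} - {z}. B z w)"
  then show "z = x"
    using assms asympD by fastforce
qed

lemma
  assumes "asymp B" "totalp B"
  shows two_point_selection_tournament_selection: "two_point_selection (tournament_selection B)"
    and sel_less_tournament_selection: "sel_less (tournament_selection B) = B"
proof -
  have pair: "tournament_selection B {x, y} = (if B x y then x else y)" if "x \<noteq> y" for x y
    using tournament_selection_winner[OF assms(1)] totalpD[OF assms(2) that]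
    by (metis insert_commute)
  show "two_point_selection (tournament_selection B)"
    unfolding two_point_selection_def by (auto simp: card_2_iff pair)
  have irrefl: "\<not> B x x" for x
    using asympD[OF assms(1)] by blast
  show "sel_less (tournament_selection B) = B"
  proof (intro ext)
    fix r s
    show "sel_less (tournament_selection B) r s = B r s"
      using irrefl[of r] totalpD[OF assms(2), of r s] asympD[OF assms(1), of s r]
      by (cases "r = s") (auto simp: sel_less_def pair)
  qed
qed

lemma topspace_sel_topology:
  assumes "two_point_selection f"
  shows "topspace (sel_topology f) = UNIV"
proof -
  have "x \<in> \<Union>(range (sel_left_ray f) \<union> range (sel_right_ray f))" for x
  proof -
    have "card {x, x + 1} = 2"
      by simp
    then have "f {x, x + 1} \<in> {x, x + 1}"
      using assms unfolding two_point_selection_def by blast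
    moreover have "{x + 1, x} = {x, x + 1}"
      by blast
    ultimately have "x \<in> sel_left_ray f (x + 1) \<union> sel_right_ray f (x + 1)"
      by (auto simp: sel_left_ray_def sel_right_ray_def sel_less_def)
    then show ?thesis
      by auto
  qed
  then show ?thesis
    unfolding sel_topology_def topology_generated_by_topspace by (metis UNIV_eq_I)
qed

lemma openin_topology_generated_by_subbase:
  assumes "openin (topology_generated_by S) U" "x \<in> U"
  obtains F where "finite F" "F \<subseteq> S" "x \<in> \<Inter>F" "\<Inter>F \<subseteq> U"
proof -
  obtain \<U> where \<U>: "\<U> \<subseteq> Collect (finite' intersection_of (\<lambda>K. K \<in> S))" "\<Union>\<U> = U"
    using openin_topology_generated_by[OF assms(1)]
    unfolding generate_topology_on_eq union_of_def by auto
  then obtain T where "T \<in> \<U>" "x \<in> T"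
    using assms(2) by blast
  then obtain F where "finite F" "F \<subseteq> S" "\<Inter>F = T"
    using \<U>(1) unfolding intersection_of_def by auto
  then show ?thesis
    using that \<open>x \<in> T\<close> \<open>T \<in> \<U>\<close> \<U>(2) by blast
qed

lemma sel_topology_nhd_of_max:
  assumes "\<And>r. \<not> sel_less f q r" "openin (sel_topology f) U" "q \<in> U"
  obtains R where "finite R" "q \<notin> R" "(\<Inter>r\<in>R. sel_right_ray f r) \<subseteq> U"
proof -
  obtain F where F: "finite F" "F \<subseteq> range (sel_left_ray f) \<union> range (sel_right_ray f)"
    "q \<in> \<Inter>F" "\<Inter>F \<subseteq> U"
    using assms(2,3) unfolding sel_topology_def by (rule openin_topology_generated_by_subbase)
  have "F \<subseteq> sel_right_ray f ` (- {q})"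
  proof
    fix K assume "K \<in> F"
    then have "q \<in> K" "K \<in> range (sel_left_ray f) \<union> range (sel_right_ray f)"
      using F(2,3) by auto
    then show "K \<in> sel_right_ray f ` (- {q})"
      using assms(1) by (auto simp: sel_left_ray_def sel_right_ray_def sel_less_def)
  qed
  then obtain R where "R \<subseteq> - {q}" "finite R" "F = sel_right_ray f ` R"
    using finite_subset_image[OF F(1)] by blast
  then show ?thesis
    using F(4) that by blast
qed

lemma sel_topology_nhd_of_min:
  assumes "\<And>r. \<not> sel_less f r d" "openin (sel_topology f) U" "d \<in> U"
  obtains L where "finite L" "d \<notin> L" "(\<Inter>r\<in>L. sel_left_ray f r) \<subseteq> U"
proof -
  obtain F where F: "finite F" "F \<subseteq> range (sel_left_ray f) \<union> range (sel_right_ray f)"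
    "d \<in> \<Inter>F" "\<Inter>F \<subseteq> U"
    using assms(2,3) unfolding sel_topology_def by (rule openin_topology_generated_by_subbase)
  have "F \<subseteq> sel_left_ray f ` (- {d})"
  proof
    fix K assume "K \<in> F"
    then have "d \<in> K" "K \<in> range (sel_left_ray f) \<union> range (sel_right_ray f)"
      using F(2,3) by auto
    then show "K \<in> sel_left_ray f ` (- {d})"
      using assms(1) by (auto simp: sel_left_ray_def sel_right_ray_def sel_less_def)
  qed
  then obtain L where "L \<subseteq> - {d}" "finite L" "F = sel_left_ray f ` L"
    using finite_subset_image[OF F(1)] by blast
  then show ?thesis
    using F(4) that by blast
qed

lemma not_closedin_sel_topology:
  assumes f: "two_point_selection f"
    and q: "q \<notin> C" "\<And>r. \<not> sel_less f q r"
    and bounded: "\<And>R. finite R \<Longrightarrow> \<exists>c\<in>C. \<forall>r\<in>R - {q}. sel_less f r c"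
  shows "\<not> closedin (sel_topology f) C"
proof
  assume "closedin (sel_topology f) C"
  then have "openin (sel_topology f) (- C)"
    by (simp add: closedin_def topspace_sel_topology[OF f] Compl_eq_Diff_UNIV)
  then obtain R where R: "finite R" "q \<notin> R" "(\<Inter>r\<in>R. sel_right_ray f r) \<subseteq> - C"
    using sel_topology_nhd_of_max[OF q(2)] q(1) by blast
  obtain c where "c \<in> C" "\<forall>r\<in>R. sel_less f r c"
    using bounded[OF R(1)] R(2) by auto
  then show False
    using R(3) by (auto simp: sel_right_ray_def)
qed

lemma not_gdelta_in_sel_topology:
  assumes f: "two_point_selection f"
    and d: "d \<in> C" "\<And>r. \<not> sel_less f r d"
    and bounded: "\<And>R. countable R \<Longrightarrow> \<exists>x. x \<notin> C \<and> (\<forall>r\<in>R - {d}. sel_less f x r)"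
  shows "\<not> gdelta_in (sel_topology f) C"
proof
  assume "gdelta_in (sel_topology f) C"
  then obtain \<U> where \<U>: "countable \<U>" "\<And>U. U \<in> \<U> \<Longrightarrow> openin (sel_topology f) U" "\<Inter>\<U> = C"
    unfolding gdelta_in_alt intersection_of_def by auto
  have "\<exists>L. finite L \<and> d \<notin> L \<and> (\<Inter>r\<in>L. sel_left_ray f r) \<subseteq> U" if U: "U \<in> \<U>" for U
  proof -
    have "d \<in> U"
      using \<U>(3) d(1) U by blast
    then obtain L where "finite L" "d \<notin> L" "(\<Inter>r\<in>L. sel_left_ray f r) \<subseteq> U"
      using sel_topology_nhd_of_min[OF d(2) \<U>(2)[OF U]] by blast
    then show ?thesis
      by blast
  qed
  then obtain L where L: "\<And>U. U \<in> \<U> \<Longrightarrow> finite (L U)" "\<And>U. U \<in> \<U> \<Longrightarrow> d \<notin> L U"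
    "\<And>U. U \<in> \<U> \<Longrightarrow> (\<Inter>r\<in>L U. sel_left_ray f r) \<subseteq> U"
    by metis
  have "countable (\<Union>U\<in>\<U>. L U)"
    using \<U>(1) L(1) by (simp add: countable_finite)
  then obtain x where x: "x \<notin> C" "\<forall>r\<in>(\<Union>U\<in>\<U>. L U) - {d}. sel_less f x r"
    using bounded by blast
  have "x \<in> U" if "U \<in> \<U>" for U
  proof -
    have "x \<in> sel_left_ray f r" if "r \<in> L U" for r
      using L(2) x(2) that \<open>U \<in> \<U>\<close> unfolding sel_left_ray_def by blast
    then show ?thesis
      using L(3)[OF that] by blast
  qed
  then show False
    using \<U>(3) x(1) by blast
qed

(* The columns 1, 2, ... of inv e x under Cantor pairing, decoded by e; column 0 is left free,
   which gives every countable set uncountably many codes. *)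
definition coded_set :: "(nat set \<Rightarrow> 'a) \<Rightarrow> 'a \<Rightarrow> 'a set" where
  "coded_set e x = range (\<lambda>k. e {m. prod_encode (Suc k, m) \<in> inv e x})"

lemma uncountable_UNIV_nat_set: "uncountable (UNIV :: nat set set)"
  using nat_sets_eqpoll_reals uncountable_UNIV_real uncountable_bij_betw
  unfolding eqpoll_def by blast

lemma uncountable_coded_set_fibre:
  assumes e: "bij_betw e UNIV S" and T: "countable T" "T \<noteq> {}" "T \<subseteq> S"
  shows "uncountable {x \<in> S. coded_set e x = T}"
proof
  define h where "h = from_nat_into T"
  have h: "range h = T"
    using T by (simp add: h_def)
  define code where "code X =
    e {p. case prod_decode p of (0, m) \<Rightarrow> m \<in> X | (Suc k, m) \<Rightarrow> m \<in> inv e (h k)}" for X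
  have column: "{m. prod_encode (j, m) \<in> inv e (code X)} = (case j of 0 \<Rightarrow> X | Suc k \<Rightarrow> inv e (h k))"
    for j X
    using e by (cases j) (simp_all add: code_def bij_betw_def inv_f_f)
  have "inj code"
    by (rule injI) (metis column[of 0] nat.case(1))
  have "e (inv e (h k)) = h k" for k
    using e h T(3) by (metis bij_betw_imp_surj_on f_inv_into_f rangeI subsetD)
  then have "coded_set e (code X) = T" for X
    using h by (simp add: coded_set_def column)
  moreover have "code X \<in> S" for X
    using e by (auto simp: code_def bij_betw_def)
  ultimately have "range code \<subseteq> {x \<in> S. coded_set e x = T}"
    by blast
  moreover assume "countable {x \<in> S. coded_set e x = T}"
  ultimately show False
    using \<open>inj code\<close> uncountable_UNIV_nat_set countable_image_inj_on countable_subset by blast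
qed

definition code_tournament :: "(nat set \<Rightarrow> 'a::linorder) \<Rightarrow> 'a \<Rightarrow> 'a \<Rightarrow> bool" where
  "code_tournament e x y \<longleftrightarrow> x \<noteq> y \<and>
     (if x \<in> coded_set e y \<longleftrightarrow> y \<in> coded_set e x then x < y else y \<in> coded_set e x)"

lemma asymp_code_tournament: "asymp (code_tournament e)"
  by (rule asympI) (auto simp: code_tournament_def split: if_splits)

lemma totalp_code_tournament: "totalp (code_tournament e)"
  by (rule totalpI) (auto simp: code_tournament_def)

lemma code_tournament_beats_countable:
  assumes e: "bij_betw e UNIV S" and "S \<noteq> {}" "countable R"
  obtains x where "x \<in> S" "x \<notin> R" "\<And>r. r \<in> R \<inter> S \<Longrightarrow> code_tournament e x r"
proof -
  obtain s where "s \<in> S"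
    using assms(2) by blast
  define T where "T = insert s (R \<inter> S)"
  have "uncountable {x \<in> S. coded_set e x = T}"
    using e \<open>s \<in> S\<close> \<open>countable R\<close> by (intro uncountable_coded_set_fibre) (auto simp: T_def)
  moreover have "countable (R \<union> (\<Union>r\<in>R. coded_set e r))"
    using \<open>countable R\<close> by (simp add: coded_set_def)
  ultimately have "{x \<in> S. coded_set e x = T} - (R \<union> (\<Union>r\<in>R. coded_set e r)) \<noteq> {}"
    by (metis uncountable_minus_countable countable_empty)
  then obtain x where x: "x \<in> S" "coded_set e x = T" "x \<notin> R" "\<forall>r\<in>R. x \<notin> coded_set e r"
    by blast
  then have "code_tournament e x r" if "r \<in> R \<inter> S" for r
    using that by (auto simp: code_tournament_def T_def)
  then show ?thesis
    using that x by blast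
qed

definition index_key :: "(nat \<Rightarrow> real) \<Rightarrow> real \<Rightarrow> real" where
  "index_key a x = (if x \<in> range a then real (inv a x) else - exp x)"

lemma index_key_apply [simp]: "inj a \<Longrightarrow> index_key a (a n) = real n"
  by (simp add: index_key_def)

lemma inj_index_key:
  assumes "inj a"
  shows "inj (index_key a)"
proof (rule injI)
  fix x y assume eq: "index_key a x = index_key a y"
  have sign: "index_key a z \<ge> 0 \<longleftrightarrow> z \<in> range a" for z
    using exp_gt_zero[of z] by (auto simp: index_key_def)
  show "x = y"
  proof (cases "x \<in> range a")
    case True
    then have "y \<in> range a"
      using sign eq by metis
    then show ?thesis
      using True eq by (auto simp: index_key_def assms)
  next
    case False
    then have "y \<notin> range a"
      using sign eq by metis
    then show ?thesis
      using False eq by (simp add: index_key_def)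
  qed
qed

lemma index_key_bounded:
  assumes "finite R"
  obtains n where "\<And>r. r \<in> R \<Longrightarrow> index_key a r < real n"
proof -
  obtain n where "Max (insert 0 (index_key a ` R)) < real n"
    using reals_Archimedean2 by blast
  then show ?thesis
    using that assms by fastforce
qed

definition block :: "'a set \<Rightarrow> 'a \<Rightarrow> 'a \<Rightarrow> 'a \<Rightarrow> nat" where
  "block C d q x = (if x = d then 0 else if x = q then 3 else if x \<in> C then 2 else 1)"

definition block_tournament ::
    "'a set \<Rightarrow> 'a \<Rightarrow> 'a \<Rightarrow> ('a \<Rightarrow> 'b::linorder) \<Rightarrow> ('a \<Rightarrow> 'a \<Rightarrow> bool) \<Rightarrow> 'a \<Rightarrow> 'a \<Rightarrow> bool" where
  "block_tournament C d q g D x y \<longleftrightarrow> x \<noteq> y \<and>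
     (block C d q x < block C d q y \<or>
      block C d q x = block C d q y \<and> (if x \<in> C then g x < g y else D x y))"

lemma asymp_block_tournament:
  "asymp D \<Longrightarrow> asymp (block_tournament C d q g D)"
  by (rule asympI) (auto simp: block_tournament_def block_def dest: asympD split: if_splits)

lemma totalp_block_tournament:
  assumes "inj_on g C" "totalp D"
  shows "totalp (block_tournament C d q g D)"
proof (rule totalpI)
  fix x y :: 'a assume "x \<noteq> y"
  then have "x \<in> C \<Longrightarrow> y \<in> C \<Longrightarrow> g x \<noteq> g y"
    using assms(1) by (meson inj_onD)
  then show "block_tournament C d q g D x y \<or> block_tournament C d q g D y x"
    using \<open>x \<noteq> y\<close> totalpD[OF assms(2) \<open>x \<noteq> y\<close>]
    by (auto simp: block_tournament_def block_def)
qed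

lemma block_tournament_min: "d \<in> C \<Longrightarrow> \<not> block_tournament C d q g D r d"
  by (simp add: block_tournament_def block_def)

lemma block_tournament_max: "d \<in> C \<Longrightarrow> q \<notin> C \<Longrightarrow> \<not> block_tournament C d q g D q r"
  by (auto simp: block_tournament_def block_def)

lemma block_tournament_upper_bound:
  assumes "d \<in> C" "q \<notin> C" "inj a" "range a \<subseteq> C - {d}" "finite R"
  shows "\<exists>c\<in>C. \<forall>r\<in>R - {q}. block_tournament C d q (index_key a) D r c"
proof -
  obtain n where n: "\<And>r. r \<in> R \<Longrightarrow> index_key a r < real n"
    using index_key_bounded[OF assms(5)] by blast
  have "a n \<in> C" "a n \<noteq> d" "a n \<noteq> q"
    using assms(2,4) by auto
  then have "block_tournament C d q (index_key a) D r (a n)" if "r \<in> R - {q}" for r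
    using n[of r] that assms(1,3) by (auto simp: block_tournament_def block_def)
  then show ?thesis
    using \<open>a n \<in> C\<close> by blast
qed

lemma block_tournament_lower_bound:
  assumes "d \<in> C" "q \<notin> C" "bij_betw e UNIV (- C)" "countable R"
  shows "\<exists>x. x \<notin> C \<and> (\<forall>r\<in>R - {d}. block_tournament C d q g (code_tournament e) x r)"
proof -
  obtain x where x: "x \<in> - C" "x \<notin> insert q R"
    "\<And>r. r \<in> insert q R \<inter> - C \<Longrightarrow> code_tournament e x r"
    using code_tournament_beats_countable[OF assms(3) _ countable_insert[OF assms(4)]] assms(2)
    by blast
  have "block_tournament C d q g (code_tournament e) x r" if r: "r \<in> R - {d}" for r
  proof (cases "r = q \<or> r \<in> C")
    case True
    then show ?thesis
      using x(1,2) r assms(1) by (auto simp: block_tournament_def block_def)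
  next
    case False
    then have "code_tournament e x r"
      using x(3) r by blast
    then show ?thesis
      using False x(1,2) r assms(1) by (auto simp: block_tournament_def block_def)
  qed
  then show ?thesis
    using x(1) by blast
qed

theorem theorem3p17:
  fixes C :: "real set"
  assumes "infinite C"
    and "(UNIV - C) \<approx> (UNIV :: real set)"
  shows "\<exists>f. two_point_selection f \<and>
           \<not> closedin (sel_topology f) C \<and> \<not> gdelta_in (sel_topology f) C"
proof -
  obtain d where d: "d \<in> C"
    using assms(1) by fastforce
  obtain a :: "nat \<Rightarrow> real" where a: "inj a" "range a \<subseteq> C - {d}"
    using infinite_countable_subset[of "C - {d}"] assms(1) by auto
  obtain e :: "nat set \<Rightarrow> real" where e: "bij_betw e UNIV (- C)"
    using eqpoll_trans[OF nat_sets_eqpoll_reals eqpoll_sym[OF assms(2)]]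
    by (auto simp: eqpoll_def Compl_eq_Diff_UNIV)
  obtain q where q: "q \<notin> C"
    using e by (auto simp: bij_betw_def)
  define B where "B = block_tournament C d q (index_key a) (code_tournament e)"
  have "asymp B" "totalp B"
    unfolding B_def using inj_index_key[OF a(1)]
    by (simp_all add: asymp_block_tournament asymp_code_tournament
        totalp_block_tournament totalp_code_tournament inj_on_subset)
  define f where "f = tournament_selection B"
  have f: "two_point_selection f" and less: "sel_less f = B"
    unfolding f_def using \<open>asymp B\<close> \<open>totalp B\<close>
    by (simp_all add: two_point_selection_tournament_selection sel_less_tournament_selection)
  have "\<not> closedin (sel_topology f) C"
    using f q block_tournament_max[OF d q] block_tournament_upper_bound[OF d q a]
    by (intro not_closedin_sel_topology) (auto simp: less B_def)
  moreover have "\<not> gdelta_in (sel_topology f) C"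
    using f d block_tournament_min[OF d] block_tournament_lower_bound[OF d q e]
    by (intro not_gdelta_in_sel_topology) (auto simp: less B_def)
  ultimately show ?thesis
    using f by blast
qed

end
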